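(* Let $m\in\mathbb{N}$, $a>-1$, and $Q(x)=(x^{4}+2ax^{2}+1)^{-(m+1)}$. For real $y$ define $$Q_{1}(y)=\Big[Q\big(y+\sqrt{y^{2}+1}\big)+Q\big(y-\sqrt{y^{2}+1}\big)\Big]+\frac{y}{\sqrt{y^{2}+1}}\Big[Q\big(y+\sqrt{y^{2}+1}\big)-Q\big(y-\sqrt{y^{2}+1}\big)\Big].$$ Then $$Q_{1}(y)=\frac{T_{m}(2y)}{2^{m}(1+a+2y^{2})^{m+1}},\qquad\text{where } T_{m}(y)=\sum_{k=0}^{m}\binom{m+k}{m-k}y^{2k}.$$ *)

theory Defs
  imports Complex_Main
begin

definition Qf :: "nat \<Rightarrow> real \<Rightarrow> real \<Rightarrow> real" where
  "Qf m a x = 1 / (x ^ 4 + 2 * a * x ^ 2 + 1) ^ (m + 1)"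

definition Q1 :: "nat \<Rightarrow> real \<Rightarrow> real \<Rightarrow> real" where
  "Q1 m a y =
     (Qf m a (y + sqrt (y ^ 2 + 1)) + Qf m a (y - sqrt (y ^ 2 + 1)))
     + y / sqrt (y ^ 2 + 1) * (Qf m a (y + sqrt (y ^ 2 + 1)) - Qf m a (y - sqrt (y ^ 2 + 1)))"

definition Tpoly :: "nat \<Rightarrow> real \<Rightarrow> real" where
  "Tpoly m y = (\<Sum>k = 0..m. real ((m + k) choose (m - k)) * y ^ (2 * k))"

end

theory Submission
  imports Defs
begin

(*
  Put s = sqrt (y^2 + 1), x = y + s and z = s - y, so that x z = 1,
  x - z = 2y, x + z = 2s and x^2 + z^2 = 4y^2 + 2.  Because x z = 1 the quartic
  factors as x^4 + 2a x^2 + 1 = x^2 (x^2 + z^2 + 2a) = 2 (1 + a + 2y^2) x^2, hence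
  Q(x) and Q(-z) are explicit powers of z and x over (2(1 + a + 2y^2))^(m+1).
  The weights 1 + y/s and 1 - y/s equal x/s and z/s, and after absorbing them
  Q1 becomes (x^(2m+1) + z^(2m+1)) / (s (2(1 + a + 2y^2))^(m+1)).

  The remaining ingredient is the identity x^(2m+1) + z^(2m+1) = (x + z) T_m(x - z)
  for x z = 1.  Both sides satisfy the recurrence f(m+2) = (u^2 + 2) f(m+1) - f(m)
  with u = x - z: for power sums this is elementary, for T_m it follows from a
  double Pascal identity for the coefficients binom(m+k, m-k).
*)

text \<open>Coefficient of u^(2k) in T_m, extended by zero beyond k = m (note that
  binom(m+k, m-k) itself is 1, not 0, for k > m because of truncated subtraction).\<close>
definition Tcoeff :: "nat \<Rightarrow> nat \<Rightarrow> real" where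
  "Tcoeff m k = (if k \<le> m then real ((m + k) choose (m - k)) else 0)"

lemma Tpoly_as_Tcoeff_sum:
  assumes "m < n"
  shows "Tpoly m u = (\<Sum>k<n. Tcoeff m k * u ^ (2 * k))"
  unfolding Tpoly_def Tcoeff_def using assms
  by (intro sum.mono_neutral_cong_left) auto

lemma Tpoly_shifted_sum:
  assumes "m \<le> n"
  shows "Tpoly m u = 1 + (\<Sum>k<n. Tcoeff m (Suc k) * u ^ (2 * Suc k))"
proof -
  have c0: "Tcoeff m 0 * u ^ (2 * 0) = 1"
    by (simp add: Tcoeff_def)
  have "Tpoly m u = (\<Sum>k<Suc n. Tcoeff m k * u ^ (2 * k))"
    using assms by (intro Tpoly_as_Tcoeff_sum) simp
  then show ?thesis
    by (simp only: sum.lessThan_Suc_shift c0)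
qed

text \<open>Applying Pascal's rule twice: binom(N+2, t+2) is the second difference
  binom(N, t+2) + 2 binom(N+1, t+1) - binom(N, t).\<close>
lemma choose_double_Pascal:
  "(Suc (Suc N) choose Suc (Suc t)) + (N choose t) = (N choose Suc (Suc t)) + 2 * (Suc N choose Suc t)"
proof -
  have Pascal: "Suc (Suc N) choose Suc (Suc t) = (Suc N choose Suc t) + (Suc N choose Suc (Suc t))"
    "Suc N choose Suc (Suc t) = (N choose Suc t) + (N choose Suc (Suc t))"
    "Suc N choose Suc t = (N choose t) + (N choose Suc t)"
    by (rule binomial_Suc_Suc)+
  show ?thesis
    by (simp only: Pascal) simp
qed

lemma Tcoeff_rec:
  "Tcoeff (Suc (Suc m)) (Suc k) = Tcoeff (Suc m) k + 2 * Tcoeff (Suc m) (Suc k) - Tcoeff m (Suc k)"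
proof (cases "Suc k \<le> m")
  case True
  then obtain t where m: "m = Suc k + t"
    using le_Suc_ex by blast
  define N where "N = 2 * k + t + 2"
  have idx: "Suc (Suc m) + Suc k = Suc (Suc N)" "Suc (Suc m) - Suc k = Suc (Suc t)"
    "Suc m + k = N" "Suc m - k = Suc (Suc t)" "Suc m + Suc k = Suc N" "Suc m - Suc k = Suc t"
    "m + Suc k = N" "m - Suc k = t"
    unfolding m N_def by simp_all
  have "k \<le> m"
    using True by simp
  have "Tcoeff (Suc (Suc m)) (Suc k) = real (Suc (Suc N) choose Suc (Suc t))"
    "Tcoeff (Suc m) k = real (N choose Suc (Suc t))"
    "Tcoeff (Suc m) (Suc k) = real (Suc N choose Suc t)"
    "Tcoeff m (Suc k) = real (N choose t)"
    unfolding Tcoeff_def using True \<open>k \<le> m\<close> by (simp_all only: idx if_True le_SucI Suc_le_mono)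
  with choose_double_Pascal[of N t, THEN arg_cong[where f = real]] show ?thesis
    by simp
next
  case False
  then have "k = m \<or> k > m" by linarith
  then show ?thesis
    by (auto simp: Tcoeff_def)
qed

lemma Tpoly_rec:
  "Tpoly (Suc (Suc m)) u = (u^2 + 2) * Tpoly (Suc m) u - Tpoly m u"
proof -
  let ?n = "Suc (Suc m)"
  let ?S = "\<lambda>j. \<Sum>k<?n. Tcoeff j (Suc k) * u ^ (2 * Suc k)"
  have T1: "Tpoly (Suc m) u = (\<Sum>k<?n. Tcoeff (Suc m) k * u ^ (2 * k))"
    by (rule Tpoly_as_Tcoeff_sum) simp
  have "Tpoly ?n u = 1 + (\<Sum>k<?n. (Tcoeff (Suc m) k + 2 * Tcoeff (Suc m) (Suc k)
      - Tcoeff m (Suc k)) * u ^ (2 * Suc k))"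
    by (simp only: Tpoly_shifted_sum[of ?n ?n] Tcoeff_rec order_refl)
  also have "\<dots> = 1 + u^2 * (\<Sum>k<?n. Tcoeff (Suc m) k * u ^ (2 * k)) + 2 * ?S (Suc m) - ?S m"
    by (simp add: algebra_simps power2_eq_square sum_subtractf sum.distrib sum_distrib_left)
  also have "\<dots> = (u^2 + 2) * Tpoly (Suc m) u - Tpoly m u"
    using Tpoly_shifted_sum[of "Suc m" ?n u] Tpoly_shifted_sum[of m ?n u]
    by (simp add: T1 algebra_simps)
  finally show ?thesis .
qed

lemma reciprocal_power_sum_rec:
  fixes x z :: "'a :: comm_ring_1"
  assumes "x * z = 1"
  shows "x ^ (k + 4) + z ^ (k + 4) = (x^2 + z^2) * (x ^ (k + 2) + z ^ (k + 2)) - (x ^ k + z ^ k)"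
proof -
  have "(x^2 + z^2) * (x ^ (k + 2) + z ^ (k + 2))
      = x ^ (k + 4) + z ^ (k + 4) + (x * z)^2 * (x ^ k + z ^ k)"
    by (simp add: algebra_simps power_add power_mult_distrib power2_eq_square
        power4_eq_xxxx mult.assoc)
  then show ?thesis
    using assms by simp
qed

lemma odd_power_sum_Tpoly:
  fixes x z :: real
  assumes xz: "x * z = 1"
  shows "x ^ (2 * m + 1) + z ^ (2 * m + 1) = (x + z) * Tpoly m (x - z)"
proof (induction m rule: induct_nat_012)
  case 0
  then show ?case
    by (simp add: Tpoly_def)
next
  case 1
  have "x^3 + z^3 = (x + z) * ((x - z)^2 + 1)"
    using xz by (simp add: algebra_simps power2_eq_square power3_eq_cube)
  then show ?case
    by (simp add: Tpoly_def)
next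
  case (ge2 n)
  have sq: "x^2 + z^2 = (x - z)^2 + 2"
    using xz by (simp add: power2_eq_square algebra_simps)
  have "x ^ (2 * Suc (Suc n) + 1) + z ^ (2 * Suc (Suc n) + 1)
      = ((x - z)^2 + 2) * (x ^ (2 * Suc n + 1) + z ^ (2 * Suc n + 1)) - (x ^ (2 * n + 1) + z ^ (2 * n + 1))"
  proof -
    have "2 * Suc (Suc n) + 1 = (2 * n + 1) + 4" "2 * Suc n + 1 = (2 * n + 1) + 2"
      by simp_all
    then show ?thesis
      unfolding sq[symmetric] by (simp only: reciprocal_power_sum_rec[OF xz])
  qed
  also have "\<dots> = (x + z) * Tpoly (Suc (Suc n)) (x - z)"
    by (simp only: ge2.IH Tpoly_rec) (simp add: algebra_simps)
  finally show ?case .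
qed

text \<open>If x z = 1 then x^4 + 2a x^2 + 1 = x^2 (x^2 + z^2 + 2a), so Q(x) is a power
  of z over a power of x^2 + z^2 + 2a.\<close>
lemma Qf_reciprocal:
  assumes xz: "x * z = 1"
  shows "Qf m a x = (z^2) ^ (m + 1) / (x^2 + z^2 + 2 * a) ^ (m + 1)"
proof -
  have xz2: "x^2 * z^2 = 1"
    using xz by (metis power_mult_distrib one_power2)
  then have "x^4 + 2 * a * x^2 + 1 = x^2 * (x^2 + z^2 + 2 * a)"
    by (simp add: algebra_simps power4_eq_xxxx power2_eq_square)
  moreover have "(x^2) ^ (m + 1) * (z^2) ^ (m + 1) = 1"
    using xz2 by (metis power_mult_distrib power_one)
  then have "1 / (x^2) ^ (m + 1) = (z^2) ^ (m + 1)"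
    by (metis nonzero_eq_divide_eq mult_zero_left zero_neq_one mult.commute)
  ultimately show ?thesis
    unfolding Qf_def by (simp only: power_mult_distrib divide_divide_eq_left[symmetric])
qed

lemma reciprocal_absorb:
  fixes x z :: "'a :: comm_ring_1"
  assumes "x * z = 1"
  shows "x * (z^2) ^ (m + 1) = z ^ (2 * m + 1)"
proof -
  have "(z^2) ^ (m + 1) = z * z ^ (2 * m + 1)"
    by (simp flip: power_mult power_Suc)
  then have "x * (z^2) ^ (m + 1) = (x * z) * z ^ (2 * m + 1)"
    by (simp only: mult.assoc)
  then show ?thesis
    using assms by simp
qed

lemma Q1_as_power_sum:
  fixes m :: nat and a y :: real
  defines "s \<equiv> sqrt (y^2 + 1)"
  shows "Q1 m a y = ((y + s) ^ (2 * m + 1) + (s - y) ^ (2 * m + 1))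
                    / (s * (2 * (1 + a + 2 * y^2)) ^ (m + 1))"
proof -
  define C where "C = 1 + a + 2 * y^2"
  define x where "x = y + s"
  define z where "z = s - y"
  have s2: "s^2 = y^2 + 1" and s_pos: "s > 0"
    unfolding s_def by (simp_all add: add_nonneg_pos)
  have xz: "x * z = 1" and zx: "z * x = 1"
    unfolding x_def z_def using s2 by (simp_all add: algebra_simps power2_eq_square)
  have D: "x^2 + z^2 + 2 * a = 2 * C" "z^2 + x^2 + 2 * a = 2 * C"
    unfolding x_def z_def C_def using s2 by (simp_all add: algebra_simps power2_eq_square)
  have Qx: "Qf m a x = (z^2) ^ (m + 1) / (2 * C) ^ (m + 1)"
    by (simp only: Qf_reciprocal[OF xz] D(1))
  have Qz: "Qf m a (- z) = (x^2) ^ (m + 1) / (2 * C) ^ (m + 1)"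
    using Qf_reciprocal[OF zx, of m a] by (simp add: Qf_def D(2))
  have "Q1 m a y = (x / s) * Qf m a x + (z / s) * Qf m a (- z)"
    unfolding Q1_def s_def[symmetric] x_def z_def using s_pos
    by (simp add: field_simps)
  also have "\<dots> = (x * (z^2) ^ (m + 1) + z * (x^2) ^ (m + 1)) / (s * (2 * C) ^ (m + 1))"
    by (simp add: Qx Qz add_divide_distrib)
  also have "\<dots> = (x ^ (2 * m + 1) + z ^ (2 * m + 1)) / (s * (2 * C) ^ (m + 1))"
    unfolding reciprocal_absorb[OF xz] reciprocal_absorb[OF zx] add.commute[of "z ^ (2 * m + 1)"] ..
  finally show ?thesis
    unfolding x_def z_def C_def .
qed

theorem mainTheorem4:
  fixes m :: nat and a y :: real
  assumes "a > -1"
  shows "Q1 m a y = Tpoly m (2 * y) / (2 ^ m * (1 + a + 2 * y ^ 2) ^ (m + 1))"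
proof -
  define s where "s = sqrt (y^2 + 1)"
  define P where "P = 2 ^ m * (1 + a + 2 * y ^ 2) ^ (m + 1)"
  have s_pos: "s > 0"
    unfolding s_def by (simp add: add_nonneg_pos)
  have reciprocal: "(y + s) * (s - y) = 1"
    unfolding s_def by (simp add: algebra_simps power2_eq_square)
  have denominator: "(2 * (1 + a + 2 * y^2)) ^ (m + 1) = 2 * P"
    unfolding P_def by (subst power_mult_distrib) simp
  have "Q1 m a y = ((y + s) + (s - y)) * Tpoly m ((y + s) - (s - y)) / (s * (2 * P))"
    unfolding Q1_as_power_sum s_def[symmetric] odd_power_sum_Tpoly[OF reciprocal] denominator ..
  also have "\<dots> = (2 * s) * Tpoly m (2 * y) / ((2 * s) * P)"
    by (simp add: mult.assoc)
  also have "\<dots> = Tpoly m (2 * y) / P"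
    using s_pos by simp
  finally show ?thesis
    unfolding P_def .
qed

end
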